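(* Let $R$ be a finite Frobenius ring, $M$ a finite $R$-bimodule, and $B$ a non-degenerate bilinear form on $M$. Then $$\mathrm{BLF}(M)=\{B\cdot\gamma:\gamma\in\operatorname{Aut}({}_RM)\}=\{B\cdot\eta:\eta\in\operatorname{Aut}(M_R)\}.$$
   Context: A bilinear form on $M$ is a map $B:M\times M\to R$ that is biadditive with $B(rx,y)=rB(x,y)$ and $B(x,yr)=B(x,y)r$ for $r\in R$, $x,y\in M$. It is non-degenerate if $B(x,y)=0$ for all $y$ implies $x=0$, and $B(x,y)=0$ for all $x$ implies $y=0$. $\mathrm{BLF}(M)$ is the set of non-degenerate bilinear forms on $M$. $\operatorname{Aut}({}_RM)$ (resp. $\operatorname{Aut}(M_R)$) is the group of left (resp. right) $R$-module automorphisms of $M$. For $\gamma\in\operatorname{Aut}({}_RM)$, $(B\cdot\gamma)(x,y)=B(\gamma(x),y)$; for $\eta\in\operatorname{Aut}(M_R)$, $(B\cdot\eta)(x,y)=B(x,\eta(y))$. *)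

theory Defs
  imports Main
begin

definition left_ideal :: "'r::ring_1 set \<Rightarrow> bool" where
  "left_ideal I \<longleftrightarrow> 0 \<in> I \<and> (\<forall>a\<in>I. \<forall>b\<in>I. a + b \<in> I) \<and> (\<forall>a\<in>I. - a \<in> I)
      \<and> (\<forall>r a. a \<in> I \<longrightarrow> r * a \<in> I)"

definition right_ideal :: "'r::ring_1 set \<Rightarrow> bool" where
  "right_ideal I \<longleftrightarrow> 0 \<in> I \<and> (\<forall>a\<in>I. \<forall>b\<in>I. a + b \<in> I) \<and> (\<forall>a\<in>I. - a \<in> I)
      \<and> (\<forall>r a. a \<in> I \<longrightarrow> a * r \<in> I)"

definition minimal_left_ideal :: "'r::ring_1 set \<Rightarrow> bool" where
  "minimal_left_ideal I \<longleftrightarrow> left_ideal I \<and> I \<noteq> {0}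
      \<and> (\<forall>K. left_ideal K \<and> K \<subseteq> I \<longrightarrow> K = {0} \<or> K = I)"

definition minimal_right_ideal :: "'r::ring_1 set \<Rightarrow> bool" where
  "minimal_right_ideal I \<longleftrightarrow> right_ideal I \<and> I \<noteq> {0}
      \<and> (\<forall>K. right_ideal K \<and> K \<subseteq> I \<longrightarrow> K = {0} \<or> K = I)"

definition maximal_left_ideal :: "'r::ring_1 set \<Rightarrow> bool" where
  "maximal_left_ideal I \<longleftrightarrow> left_ideal I \<and> I \<noteq> UNIV
      \<and> (\<forall>K. left_ideal K \<and> I \<subseteq> K \<longrightarrow> K = I \<or> K = UNIV)"

definition maximal_right_ideal :: "'r::ring_1 set \<Rightarrow> bool" where
  "maximal_right_ideal I \<longleftrightarrow> right_ideal I \<and> I \<noteq> UNIV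
      \<and> (\<forall>K. right_ideal K \<and> I \<subseteq> K \<longrightarrow> K = I \<or> K = UNIV)"

definition left_socle :: "'r::ring_1 set" where
  "left_socle = \<Inter> {K. left_ideal K \<and> (\<forall>I. minimal_left_ideal I \<longrightarrow> I \<subseteq> K)}"

definition right_socle :: "'r::ring_1 set" where
  "right_socle = \<Inter> {K. right_ideal K \<and> (\<forall>I. minimal_right_ideal I \<longrightarrow> I \<subseteq> K)}"

definition jacobson_left :: "'r::ring_1 set" where
  "jacobson_left = \<Inter> {I. maximal_left_ideal I}"

definition jacobson_right :: "'r::ring_1 set" where
  "jacobson_right = \<Inter> {I. maximal_right_ideal I}"

text \<open>R is Frobenius iff soc(_R R) \<cong> _R(R/J) and soc(R_R) \<cong> (R/J)_R. An isomorphism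
  R/J \<cong> S is encoded as a module epimorphism R \<rightarrow> S with kernel J.\<close>
definition frobenius_ring :: "'r::ring_1 itself \<Rightarrow> bool" where
  "frobenius_ring _ \<longleftrightarrow>
     (\<exists>f :: 'r \<Rightarrow> 'r. (\<forall>a b. f (a + b) = f a + f b) \<and> (\<forall>r a. f (r * a) = r * f a)
        \<and> range f = (left_socle :: 'r set) \<and> {a. f a = 0} = (jacobson_left :: 'r set)) \<and>
     (\<exists>f :: 'r \<Rightarrow> 'r. (\<forall>a b. f (a + b) = f a + f b) \<and> (\<forall>r a. f (a * r) = f a * r)
        \<and> range f = (right_socle :: 'r set) \<and> {a. f a = 0} = (jacobson_right :: 'r set))"

definition bimodule :: "('r::ring_1 \<Rightarrow> 'm::ab_group_add \<Rightarrow> 'm) \<Rightarrow> ('m \<Rightarrow> 'r \<Rightarrow> 'm) \<Rightarrow> bool" where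
  "bimodule lm rm \<longleftrightarrow>
     (\<forall>r x y. lm r (x + y) = lm r x + lm r y) \<and> (\<forall>r s x. lm (r + s) x = lm r x + lm s x)
   \<and> (\<forall>r s x. lm (r * s) x = lm r (lm s x)) \<and> (\<forall>x. lm 1 x = x)
   \<and> (\<forall>r x y. rm (x + y) r = rm x r + rm y r) \<and> (\<forall>r s x. rm x (r + s) = rm x r + rm x s)
   \<and> (\<forall>r s x. rm x (r * s) = rm (rm x r) s) \<and> (\<forall>x. rm x 1 = x)
   \<and> (\<forall>r s x. rm (lm r x) s = lm r (rm x s))"

definition bilinear_form ::
  "('r::ring_1 \<Rightarrow> 'm::ab_group_add \<Rightarrow> 'm) \<Rightarrow> ('m \<Rightarrow> 'r \<Rightarrow> 'm) \<Rightarrow> ('m \<Rightarrow> 'm \<Rightarrow> 'r) \<Rightarrow> bool" where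
  "bilinear_form lm rm B \<longleftrightarrow>
     (\<forall>x x' y. B (x + x') y = B x y + B x' y) \<and> (\<forall>x y y'. B x (y + y') = B x y + B x y')
   \<and> (\<forall>r x y. B (lm r x) y = r * B x y) \<and> (\<forall>r x y. B x (rm y r) = B x y * r)"

definition nondegenerate :: "('m::zero \<Rightarrow> 'm \<Rightarrow> 'r::zero) \<Rightarrow> bool" where
  "nondegenerate B \<longleftrightarrow> (\<forall>x. (\<forall>y. B x y = 0) \<longrightarrow> x = 0) \<and> (\<forall>y. (\<forall>x. B x y = 0) \<longrightarrow> y = 0)"

definition BLF ::
  "('r::ring_1 \<Rightarrow> 'm::ab_group_add \<Rightarrow> 'm) \<Rightarrow> ('m \<Rightarrow> 'r \<Rightarrow> 'm) \<Rightarrow> ('m \<Rightarrow> 'm \<Rightarrow> 'r) set" where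
  "BLF lm rm = {B. bilinear_form lm rm B \<and> nondegenerate B}"

definition Aut_left :: "('r::ring_1 \<Rightarrow> 'm::ab_group_add \<Rightarrow> 'm) \<Rightarrow> ('m \<Rightarrow> 'm) set" where
  "Aut_left lm = {g. bij g \<and> (\<forall>x y. g (x + y) = g x + g y) \<and> (\<forall>r x. g (lm r x) = lm r (g x))}"

definition Aut_right :: "('m::ab_group_add \<Rightarrow> 'r::ring_1 \<Rightarrow> 'm) \<Rightarrow> ('m \<Rightarrow> 'm) set" where
  "Aut_right rm = {g. bij g \<and> (\<forall>x y. g (x + y) = g x + g y) \<and> (\<forall>r x. g (rm x r) = rm (g x) r)}"

end

theory Submission
  imports Defs "HOL.Modules"
begin

text \<open>For a finite Frobenius ring \<open>R\<close> and a finite right \<open>R\<close>-module \<open>M\<close>, the dual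
  \<open>Hom(M\<^sub>R, R\<^sub>R)\<close> has at most \<open>|M|\<close> elements. This is shown along a composition series
  of \<open>M\<close>: a simple factor \<open>R/m\<close> multiplies \<open>|M|\<close> by \<open>|R/m|\<close> and the number of functionals
  by at most \<open>|lann m|\<close>, and \<open>|lann m| \<le> |R/m|\<close> because \<open>soc(R\<^sub>R) \<cong> R/J\<close> turns \<open>lann m\<close>
  into homomorphisms \<open>R/m \<rightarrow> R/J\<close>, which are counted by a cardinality version of Schur's lemma.

  Given the bound, a non-degenerate \<open>B\<close> makes \<open>x \<mapsto> B(x, -)\<close> a bijection of \<open>M\<close> onto its
  right dual, so every other non-degenerate \<open>B'\<close> is \<open>B'(x, -) = B(\<gamma> x, -)\<close> for a unique
  bijection \<open>\<gamma>\<close>, which is left linear because \<open>B\<close> and \<open>B'\<close> are. The right-hand description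
  is the same argument for the opposite ring.\<close>

lemma card_le_by_fibre_differences:
  fixes F :: "'a \<Rightarrow> 'b" and g :: "'a \<Rightarrow> 'c::ab_group_add"
  assumes "finite Y" "finite S" "F ` X \<subseteq> Y"
    and diff: "\<And>p q. p \<in> X \<Longrightarrow> q \<in> X \<Longrightarrow> F p = F q \<Longrightarrow> g p - g q \<in> S"
    and inj: "\<And>p q. p \<in> X \<Longrightarrow> q \<in> X \<Longrightarrow> F p = F q \<Longrightarrow> g p = g q \<Longrightarrow> p = q"
  shows "card X \<le> card S * card Y"
proof -
  have fibre: "card {p \<in> X. F p = y} \<le> card S" for y
  proof (cases "{p \<in> X. F p = y} = {}")
    case True
    show ?thesis unfolding True by simp
  next
    case False
    then obtain q where q: "q \<in> X" "F q = y" by auto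
    have "inj_on (\<lambda>p. g p - g q) {p \<in> X. F p = y}"
      by (rule inj_onI) (use inj in auto)
    moreover have "(\<lambda>p. g p - g q) ` {p \<in> X. F p = y} \<subseteq> S"
      using diff q by auto
    ultimately show ?thesis
      using card_inj_on_le assms(2) by blast
  qed
  have "X = (\<Union>y\<in>Y. {p \<in> X. F p = y})"
    using assms(3) by auto
  then have "card X \<le> (\<Sum>y\<in>Y. card {p \<in> X. F p = y})"
    by (metis card_UN_le assms(1))
  also have "\<dots> \<le> card S * card Y"
    using sum_bounded_above[of Y _ "card S"] fibre by (simp add: mult.commute)
  finally show ?thesis .
qed

section \<open>Counting homomorphisms between cyclic modules of a finite ring\<close>

text \<open>The multiplication is a parameter so that right ideals and right modules of the opposite ring
  cover left ideals and left modules.\<close>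
locale finite_ring =
  R: ring "(+)" "0 :: 'r::{ab_group_add, finite}" "(-)" uminus mul +
  R: monoid_mult one mul
  for mul (infixl "\<cdot>" 70) and one
begin

definition rideal :: "'r set \<Rightarrow> bool" where
  "rideal I \<longleftrightarrow> 0 \<in> I \<and> (\<forall>a\<in>I. \<forall>b\<in>I. a + b \<in> I) \<and> (\<forall>a\<in>I. - a \<in> I)
      \<and> (\<forall>r a. a \<in> I \<longrightarrow> a \<cdot> r \<in> I)"

definition max_rideal :: "'r set \<Rightarrow> bool" where
  "max_rideal I \<longleftrightarrow> rideal I \<and> I \<noteq> UNIV \<and> (\<forall>K. rideal K \<and> I \<subseteq> K \<longrightarrow> K = I \<or> K = UNIV)"

definition min_rideal :: "'r set \<Rightarrow> bool" where
  "min_rideal I \<longleftrightarrow> rideal I \<and> I \<noteq> {0} \<and> (\<forall>K. rideal K \<and> K \<subseteq> I \<longrightarrow> K = {0} \<or> K = I)"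

definition lann :: "'r set \<Rightarrow> 'r set" where
  "lann S = {x. \<forall>a\<in>S. x \<cdot> a = 0}"

text \<open>For right ideals \<open>A\<close>, \<open>B\<close>, left multiplication identifies \<open>transporter A B / B\<close> with
  \<open>Hom(R/A, R/B)\<close>; the cardinality estimates below are estimates for such Hom-sets.\<close>
definition transporter :: "'r set \<Rightarrow> 'r set \<Rightarrow> 'r set" where
  "transporter A B = {x. \<forall>a\<in>A. x \<cdot> a \<in> B}"

lemma rideal_zero: "rideal I \<Longrightarrow> 0 \<in> I"
  by (simp add: rideal_def)

lemma rideal_add: "rideal I \<Longrightarrow> a \<in> I \<Longrightarrow> b \<in> I \<Longrightarrow> a + b \<in> I"
  by (simp add: rideal_def)

lemma rideal_uminus: "rideal I \<Longrightarrow> a \<in> I \<Longrightarrow> - a \<in> I"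
  by (simp add: rideal_def)

lemma rideal_diff: "rideal I \<Longrightarrow> a \<in> I \<Longrightarrow> b \<in> I \<Longrightarrow> a - b \<in> I"
  by (metis diff_conv_add_uminus rideal_add rideal_uminus)

lemma rideal_mult: "rideal I \<Longrightarrow> a \<in> I \<Longrightarrow> a \<cdot> r \<in> I"
  by (simp add: rideal_def)

lemma rideal_UNIV: "rideal UNIV"
  by (simp add: rideal_def)

lemma rideal_Inter: "(\<And>I. I \<in> F \<Longrightarrow> rideal I) \<Longrightarrow> rideal (\<Inter>F)"
  by (simp add: rideal_def)

lemma rideal_range_mult: "rideal (range ((\<cdot>) x))"
  unfolding rideal_def
proof (intro conjI ballI allI impI)
  show "0 \<in> range ((\<cdot>) x)"
    using R.mult_zero_right by (metis rangeI)
  show "a + b \<in> range ((\<cdot>) x)" if "a \<in> range ((\<cdot>) x)" "b \<in> range ((\<cdot>) x)" for a b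
    using that by (auto simp: R.distrib_left[symmetric])
  show "- a \<in> range ((\<cdot>) x)" if "a \<in> range ((\<cdot>) x)" for a
    using that by (metis R.mult_minus_right rangeE rangeI)
  show "a \<cdot> r \<in> range ((\<cdot>) x)" if "a \<in> range ((\<cdot>) x)" for a r
    using that by (auto simp: R.mult.assoc)
qed

lemma rideal_preimage_mult: "rideal m \<Longrightarrow> rideal {a. x \<cdot> a \<in> m}"
  by (simp add: rideal_def R.distrib_left R.mult.assoc[symmetric])

lemma rideal_eq_UNIV: "rideal I \<Longrightarrow> one \<in> I \<Longrightarrow> I = UNIV"
  using rideal_mult[of I one] by auto

lemma max_rideal_rideal: "max_rideal m \<Longrightarrow> rideal m"
  by (simp add: max_rideal_def)

lemma rideal_mult_plus:
  assumes m: "rideal m"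
  shows "rideal {x \<cdot> u + \<mu> | u \<mu>. \<mu> \<in> m}"
  unfolding rideal_def
proof (intro conjI ballI allI impI)
  have "0 = x \<cdot> 0 + 0"
    by simp
  then show "0 \<in> {x \<cdot> u + \<mu> | u \<mu>. \<mu> \<in> m}"
    using rideal_zero[OF m] by blast
  show "a + b \<in> {x \<cdot> u + \<mu> | u \<mu>. \<mu> \<in> m}"
    if "a \<in> {x \<cdot> u + \<mu> | u \<mu>. \<mu> \<in> m}" "b \<in> {x \<cdot> u + \<mu> | u \<mu>. \<mu> \<in> m}" for a b
  proof -
    from that obtain u \<mu> v \<nu> where "a = x \<cdot> u + \<mu>" "\<mu> \<in> m" "b = x \<cdot> v + \<nu>" "\<nu> \<in> m"
      by blast
    then have "a + b = x \<cdot> (u + v) + (\<mu> + \<nu>)" "\<mu> + \<nu> \<in> m"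
      using rideal_add[OF m] by (simp_all add: R.distrib_left algebra_simps)
    then show ?thesis by blast
  qed
  show "- a \<in> {x \<cdot> u + \<mu> | u \<mu>. \<mu> \<in> m}" if "a \<in> {x \<cdot> u + \<mu> | u \<mu>. \<mu> \<in> m}" for a
  proof -
    from that obtain u \<mu> where "a = x \<cdot> u + \<mu>" "\<mu> \<in> m"
      by blast
    then have "- a = x \<cdot> (- u) + (- \<mu>)" "- \<mu> \<in> m"
      using rideal_uminus[OF m] by (simp_all add: R.minus_mult_right[symmetric])
    then show ?thesis by blast
  qed
  show "a \<cdot> r \<in> {x \<cdot> u + \<mu> | u \<mu>. \<mu> \<in> m}" if "a \<in> {x \<cdot> u + \<mu> | u \<mu>. \<mu> \<in> m}" for a r
  proof -
    from that obtain u \<mu> where "a = x \<cdot> u + \<mu>" "\<mu> \<in> m"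
      by blast
    then have "a \<cdot> r = x \<cdot> (u \<cdot> r) + \<mu> \<cdot> r" "\<mu> \<cdot> r \<in> m"
      using rideal_mult[OF m] by (simp_all add: R.distrib_right R.mult.assoc)
    then show ?thesis by blast
  qed
qed

lemma max_rideal_mult_plus:
  assumes "max_rideal m" "x \<notin> m"
  obtains u \<mu> where "\<mu> \<in> m" "z = x \<cdot> u + \<mu>"
proof -
  let ?K = "{x \<cdot> u + \<mu> | u \<mu>. \<mu> \<in> m}"
  have m: "rideal m"
    using assms(1) by (rule max_rideal_rideal)
  have "m \<subseteq> ?K"
  proof
    fix \<mu> assume "\<mu> \<in> m"
    moreover have "\<mu> = x \<cdot> 0 + \<mu>" by simp
    ultimately show "\<mu> \<in> ?K" by blast
  qed
  moreover have "x \<in> ?K"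
  proof -
    have "x = x \<cdot> one + 0"
      by simp
    then show ?thesis
      using rideal_zero[OF m] by blast
  qed
  ultimately have "?K = UNIV"
    using assms rideal_mult_plus[OF m] unfolding max_rideal_def by blast
  then show ?thesis
    using that by blast
qed

lemma max_rideal_preimage_mult:
  assumes m: "max_rideal m" and x: "x \<notin> m"
  shows "max_rideal {a. x \<cdot> a \<in> m}"
  unfolding max_rideal_def
proof (intro conjI allI impI)
  show "rideal {a. x \<cdot> a \<in> m}"
    using m by (simp add: max_rideal_rideal rideal_preimage_mult)
  show "{a. x \<cdot> a \<in> m} \<noteq> UNIV"
    using x by (metis (mono_tags) CollectD R.mult.right_neutral UNIV_I)
  fix K assume K: "rideal K \<and> {a. x \<cdot> a \<in> m} \<subseteq> K"
  show "K = {a. x \<cdot> a \<in> m} \<or> K = UNIV"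
  proof (cases "K \<subseteq> {a. x \<cdot> a \<in> m}")
    case False
    then obtain i where i: "i \<in> K" "x \<cdot> i \<notin> m"
      by blast
    then obtain u \<mu> where "\<mu> \<in> m" "x = x \<cdot> i \<cdot> u + \<mu>"
      using max_rideal_mult_plus[OF m] by metis
    then have "x \<cdot> (one - i \<cdot> u) \<in> m"
      by (metis R.mult.assoc R.mult.right_neutral R.right_diff_distrib add_diff_cancel_left')
    then have "(one - i \<cdot> u) + i \<cdot> u \<in> K"
      using K i(1) rideal_add rideal_mult by blast
    then show ?thesis
      using K rideal_eq_UNIV by auto
  qed (use K in blast)
qed

lemma transporter_add: "rideal B \<Longrightarrow> x \<in> transporter A B \<Longrightarrow> y \<in> transporter A B \<Longrightarrow> x + y \<in> transporter A B"
  by (simp add: transporter_def R.distrib_right rideal_add)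

lemma transporter_diff: "rideal B \<Longrightarrow> x \<in> transporter A B \<Longrightarrow> y \<in> transporter A B \<Longrightarrow> x - y \<in> transporter A B"
  by (simp add: transporter_def R.left_diff_distrib rideal_diff)

lemma subset_transporter: "rideal B \<Longrightarrow> B \<subseteq> transporter A B"
  by (auto simp: transporter_def rideal_mult)

lemma transporter_mult: "x \<in> transporter B C \<Longrightarrow> y \<in> transporter A B \<Longrightarrow> x \<cdot> y \<in> transporter A C"
  by (simp add: transporter_def R.mult.assoc)

lemma transporter_antimono: "A' \<subseteq> A \<Longrightarrow> transporter A B \<subseteq> transporter A' B"
  by (auto simp: transporter_def)

lemma transporter_mono: "B \<subseteq> B' \<Longrightarrow> transporter A B \<subseteq> transporter A B'"
  by (auto simp: transporter_def)

lemma transporter_UNIV [simp]: "transporter A UNIV = UNIV"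
  by (simp add: transporter_def)

lemma card_rideal_pos: "rideal I \<Longrightarrow> 0 < card I"
  using rideal_zero[of I] by (auto simp: card_gt_0_iff)

text \<open>Left multiplication by \<open>x\<close> is a non-zero map between the simple modules \<open>R/m\<close> and
  \<open>R/m'\<close>, hence invertible; \<open>u\<close> represents its inverse.\<close>
lemma transporter_quasi_inverse:
  assumes m: "max_rideal m" and m': "max_rideal m'"
    and x: "x \<in> transporter m m'" "x \<notin> m'"
  obtains u where "u \<in> transporter m' m"
    and "\<And>b. b \<in> transporter m m' \<Longrightarrow> u \<cdot> b \<cdot> u \<in> m \<Longrightarrow> b \<in> m'"
proof -
  have r': "rideal m'"
    using m' by (rule max_rideal_rideal)
  obtain u \<mu>' where \<mu>': "\<mu>' \<in> m'" and "one = x \<cdot> u + \<mu>'"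
    using max_rideal_mult_plus[OF m' x(2)] by metis
  then have xu: "x \<cdot> u = one - \<mu>'"
    by (simp add: eq_diff_eq)
  have "{a. x \<cdot> a \<in> m'} = m"
  proof -
    have "m \<subseteq> {a. x \<cdot> a \<in> m'}"
      using x(1) by (auto simp: transporter_def)
    moreover have "max_rideal {a. x \<cdot> a \<in> m'}"
      using m' x(2) by (rule max_rideal_preimage_mult)
    ultimately show ?thesis
      using m unfolding max_rideal_def by blast
  qed
  then have ker: "a \<in> m" if "x \<cdot> a \<in> m'" for a
    using that by blast
  have "u \<in> transporter m' m"
    unfolding transporter_def
  proof (intro CollectI ballI ker)
    fix \<mu> assume "\<mu> \<in> m'"
    moreover have "x \<cdot> (u \<cdot> \<mu>) = \<mu> - \<mu>' \<cdot> \<mu>"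
      by (simp add: R.mult.assoc[symmetric] xu R.left_diff_distrib)
    ultimately show "x \<cdot> (u \<cdot> \<mu>) \<in> m'"
      using \<mu>' r' by (simp add: rideal_diff rideal_mult)
  qed
  moreover have "b \<in> m'" if b: "b \<in> transporter m m'" "u \<cdot> b \<cdot> u \<in> m" for b
  proof -
    have "x \<cdot> (u \<cdot> b \<cdot> u) = b \<cdot> u - \<mu>' \<cdot> (b \<cdot> u)"
      by (simp add: R.mult.assoc[symmetric] xu R.left_diff_distrib)
    moreover have "x \<cdot> (u \<cdot> b \<cdot> u) \<in> m'"
      using x(1) b(2) by (simp add: transporter_def)
    ultimately have bu: "b \<cdot> u \<in> m'"
      using \<mu>' r' by (metis diff_add_cancel rideal_add rideal_mult)
    have "one - u \<cdot> x \<in> m"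
    proof (rule ker)
      have "x \<cdot> (one - u \<cdot> x) = \<mu>' \<cdot> x"
        by (simp add: R.right_diff_distrib R.mult.assoc[symmetric] xu R.left_diff_distrib)
      then show "x \<cdot> (one - u \<cdot> x) \<in> m'"
        using \<mu>' r' by (simp add: rideal_mult)
    qed
    then have "b \<cdot> (one - u \<cdot> x) \<in> m'"
      using b(1) by (simp add: transporter_def)
    moreover have "b = b \<cdot> u \<cdot> x + b \<cdot> (one - u \<cdot> x)"
      by (simp add: R.right_diff_distrib R.mult.assoc)
    ultimately show "b \<in> m'"
      using bu r' by (metis rideal_add rideal_mult)
  qed
  ultimately show ?thesis
    using that by blast
qed

text \<open>Schur's lemma for the simple modules \<open>R/m\<close> and \<open>R/m'\<close>, in counting form.\<close>
lemma card_transporter_max_rideal_swap: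
  assumes m: "max_rideal m" and m': "max_rideal m'"
  shows "card (transporter m m') * card m \<le> card (transporter m' m) * card m'"
proof (cases "transporter m m' \<subseteq> m'")
  case True
  then have "transporter m m' = m'"
    using subset_transporter[OF max_rideal_rideal[OF m']] by blast
  moreover have "card m \<le> card (transporter m' m)"
    using subset_transporter[OF max_rideal_rideal[OF m]] by (simp add: card_mono)
  ultimately show ?thesis
    by (simp add: mult.commute)
next
  case False
  then obtain x where "x \<in> transporter m m'" "x \<notin> m'"
    by blast
  then obtain u where u: "u \<in> transporter m' m"
    and u_inj: "\<And>b. b \<in> transporter m m' \<Longrightarrow> u \<cdot> b \<cdot> u \<in> m \<Longrightarrow> b \<in> m'"
    using transporter_quasi_inverse[OF m m'] by metis
  have r: "rideal m" and r': "rideal m'"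
    using m m' by (simp_all add: max_rideal_rideal)
  have "card (transporter m m' \<times> m) \<le> card m' * card (transporter m' m)"
  proof (rule card_le_by_fibre_differences[where F = "\<lambda>(a, \<nu>). u \<cdot> a \<cdot> u + \<nu>" and g = fst])
    show "(\<lambda>(a, \<nu>). u \<cdot> a \<cdot> u + \<nu>) ` (transporter m m' \<times> m) \<subseteq> transporter m' m"
    proof clarify
      fix a \<nu> assume "a \<in> transporter m m'" "\<nu> \<in> m"
      then have "u \<cdot> a \<cdot> u \<in> transporter m' m" "\<nu> \<in> transporter m' m"
        using transporter_mult u subset_transporter[OF r] by blast+
      then show "u \<cdot> a \<cdot> u + \<nu> \<in> transporter m' m"
        by (rule transporter_add[OF r])
    qed
    fix p q
    assume p: "p \<in> transporter m m' \<times> m" and q: "q \<in> transporter m m' \<times> m"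
      and eq: "(\<lambda>(a, \<nu>). u \<cdot> a \<cdot> u + \<nu>) p = (\<lambda>(a, \<nu>). u \<cdot> a \<cdot> u + \<nu>) q"
    obtain a \<nu> a' \<nu>' where pq: "p = (a, \<nu>)" "q = (a', \<nu>')"
      by (cases p, cases q)
    have "u \<cdot> a \<cdot> u + \<nu> = u \<cdot> a' \<cdot> u + \<nu>'"
      using eq pq by simp
    then have "u \<cdot> (a - a') \<cdot> u = \<nu>' - \<nu>"
      by (simp add: R.right_diff_distrib R.left_diff_distrib algebra_simps)
    then have "u \<cdot> (a - a') \<cdot> u \<in> m"
      using p q pq by (simp add: rideal_diff[OF r])
    then show "fst p - fst q \<in> m'"
      using p q pq u_inj transporter_diff[OF r'] by simp
    show "fst p = fst q \<Longrightarrow> p = q"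
      using eq pq by simp
  qed simp_all
  then show ?thesis
    by (simp add: card_cartesian_product mult.commute)
qed

lemma card_transporter_Int_le:
  assumes A: "rideal A" and m': "rideal m'"
  shows "card (transporter m (A \<inter> m')) * (card A * card m')
    \<le> card (A \<inter> m') * (card (transporter m A) * card (transporter m m'))"
proof -
  have "card (transporter m (A \<inter> m') \<times> A \<times> m')
    \<le> card (A \<inter> m') * card (transporter m A \<times> transporter m m')"
  proof (rule card_le_by_fibre_differences[where F = "\<lambda>(t, \<alpha>, \<mu>). (t + \<alpha>, t + \<mu>)" and g = fst])
    show "(\<lambda>(t, \<alpha>, \<mu>). (t + \<alpha>, t + \<mu>)) ` (transporter m (A \<inter> m') \<times> A \<times> m')
      \<subseteq> transporter m A \<times> transporter m m'"
    proof clarify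
      fix t \<alpha> \<mu> assume t: "t \<in> transporter m (A \<inter> m')" and "\<alpha> \<in> A" "\<mu> \<in> m'"
      then have "t \<in> transporter m A" "t \<in> transporter m m'"
        "\<alpha> \<in> transporter m A" "\<mu> \<in> transporter m m'"
        using transporter_mono[of "A \<inter> m'"] subset_transporter[OF A] subset_transporter[OF m'] by blast+
      then show "t + \<alpha> \<in> transporter m A \<and> t + \<mu> \<in> transporter m m'"
        by (simp add: transporter_add A m')
    qed
    fix p q
    assume p: "p \<in> transporter m (A \<inter> m') \<times> A \<times> m'" and q: "q \<in> transporter m (A \<inter> m') \<times> A \<times> m'"
      and eq: "(\<lambda>(t, \<alpha>, \<mu>). (t + \<alpha>, t + \<mu>)) p = (\<lambda>(t, \<alpha>, \<mu>). (t + \<alpha>, t + \<mu>)) q"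
    obtain t \<alpha> \<mu> t' \<alpha>' \<mu>' where pq: "p = (t, \<alpha>, \<mu>)" "q = (t', \<alpha>', \<mu>')"
      by (metis prod_cases3)
    have "t - t' = \<alpha>' - \<alpha>" "t - t' = \<mu>' - \<mu>"
      using eq pq by (simp_all add: algebra_simps)
    moreover have "\<alpha>' - \<alpha> \<in> A" "\<mu>' - \<mu> \<in> m'"
      using p q pq rideal_diff A m' by auto
    ultimately show "fst p - fst q \<in> A \<inter> m'"
      using pq by simp
    show "fst p = fst q \<Longrightarrow> p = q"
      using eq pq by simp
  qed simp_all
  then show ?thesis
    by (simp add: card_cartesian_product)
qed

lemma card_transporter_from_Int:
  assumes m: "rideal m" and \<alpha>: "\<alpha> \<in> A" "\<alpha>' \<in> m'" "one = \<alpha> + \<alpha>'"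
  shows "card (transporter A m) * card (transporter m' m) \<le> card m * card (transporter (A \<inter> m') m)"
proof -
  have split: "c \<in> m" if "c \<in> transporter A m" "c \<in> transporter m' m" for c
  proof -
    have "c = c \<cdot> \<alpha> + c \<cdot> \<alpha>'"
      by (simp add: \<alpha>(3)[symmetric] R.distrib_left[symmetric])
    moreover have "c \<cdot> \<alpha> \<in> m" "c \<cdot> \<alpha>' \<in> m"
      using that \<alpha> by (simp_all add: transporter_def)
    ultimately show ?thesis
      using m by (metis rideal_add)
  qed
  have "card (transporter A m \<times> transporter m' m) \<le> card m * card (transporter (A \<inter> m') m)"
  proof (rule card_le_by_fibre_differences[where F = "\<lambda>(a, b). a + b" and g = fst])
    show "(\<lambda>(a, b). a + b) ` (transporter A m \<times> transporter m' m) \<subseteq> transporter (A \<inter> m') m"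
    proof clarify
      fix a b assume "a \<in> transporter A m" "b \<in> transporter m' m"
      then have "a \<in> transporter (A \<inter> m') m" "b \<in> transporter (A \<inter> m') m"
        using transporter_antimono[of "A \<inter> m'"] by blast+
      then show "a + b \<in> transporter (A \<inter> m') m"
        by (rule transporter_add[OF m])
    qed
    fix p q
    assume p: "p \<in> transporter A m \<times> transporter m' m" and q: "q \<in> transporter A m \<times> transporter m' m"
      and eq: "(\<lambda>(a, b). a + b) p = (\<lambda>(a, b). a + b) q"
    obtain a b a' b' where pq: "p = (a, b)" "q = (a', b')"
      by (cases p, cases q)
    have "a - a' = b' - b"
      using eq pq by (simp add: algebra_simps)
    moreover have "a - a' \<in> transporter A m" "b' - b \<in> transporter m' m"
      using p q pq transporter_diff[OF m] by auto
    ultimately show "fst p - fst q \<in> m"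
      using pq split by simp
    show "fst p = fst q \<Longrightarrow> p = q"
      using eq pq by simp
  qed simp_all
  then show ?thesis
    by (simp add: card_cartesian_product)
qed

text \<open>Since \<open>m'\<close> is maximal and \<open>A \<not>\<subseteq> m'\<close>, \<open>A + m' = R\<close> and \<open>R/(A \<inter> m') \<cong> R/A \<oplus> R/m'\<close>;
  the two previous lemmas count the homomorphisms into and out of it componentwise.\<close>
lemma card_transporter_Int_max_rideal:
  assumes m: "max_rideal m" and m': "max_rideal m'" and A: "rideal A" and "\<not> A \<subseteq> m'"
    and IH: "card (transporter m A) * card m \<le> card (transporter A m) * card A"
  shows "card (transporter m (A \<inter> m')) * card m \<le> card (transporter (A \<inter> m') m) * card (A \<inter> m')"
proof -
  have r: "rideal m" and r': "rideal m'"
    using m m' by (simp_all add: max_rideal_rideal)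
  obtain a where a: "a \<in> A" "a \<notin> m'"
    using \<open>\<not> A \<subseteq> m'\<close> by blast
  then obtain u \<mu> where "\<mu> \<in> m'" "one = a \<cdot> u + \<mu>"
    using max_rideal_mult_plus[OF m'] by metis
  moreover have "a \<cdot> u \<in> A"
    using A a(1) by (rule rideal_mult)
  ultimately have from_Int: "card (transporter A m) * card (transporter m' m)
      \<le> card m * card (transporter (A \<inter> m') m)"
    using card_transporter_from_Int[OF r] by blast
  have to_Int: "card (transporter m (A \<inter> m')) * (card A * card m')
      \<le> card (A \<inter> m') * (card (transporter m A) * card (transporter m m'))"
    using A r' by (rule card_transporter_Int_le)
  have swap: "card (transporter m m') * card m \<le> card (transporter m' m) * card m'"
    using m m' by (rule card_transporter_max_rideal_swap)
  let ?n = "card A * card m' * card m"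
  have "card (transporter m (A \<inter> m')) * card m * ?n
      = card (transporter m (A \<inter> m')) * (card A * card m') * (card m * card m)"
    by (simp add: ac_simps)
  also have "\<dots> \<le> card (A \<inter> m') * (card (transporter m A) * card (transporter m m')) * (card m * card m)"
    using to_Int by (rule mult_right_mono) simp
  also have "\<dots> = card (A \<inter> m') * ((card (transporter m A) * card m) * (card (transporter m m') * card m))"
    by (simp add: ac_simps)
  also have "\<dots> \<le> card (A \<inter> m') * ((card (transporter A m) * card A) * (card (transporter m' m) * card m'))"
    by (intro mult_left_mono mult_mono[OF IH swap]) simp_all
  also have "\<dots> = card (A \<inter> m') * card A * card m' * (card (transporter A m) * card (transporter m' m))"
    by (simp add: ac_simps)
  also have "\<dots> \<le> card (A \<inter> m') * card A * card m' * (card m * card (transporter (A \<inter> m') m))"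
    using from_Int by (rule mult_left_mono) simp
  also have "\<dots> = card (transporter (A \<inter> m') m) * card (A \<inter> m') * ?n"
    by (simp add: ac_simps)
  finally show ?thesis
    using A r r' by (simp add: card_rideal_pos)
qed

lemma card_transporter_Inter_max_rideals:
  assumes m: "max_rideal m" and "finite F" "\<forall>I\<in>F. max_rideal I"
  shows "card (transporter m (\<Inter>F)) * card m \<le> card (transporter (\<Inter>F) m) * card (\<Inter>F)"
  using assms(2,3)
proof (induction F rule: finite_induct)
  case empty
  have "card m \<le> card (transporter UNIV m)"
    using subset_transporter[OF max_rideal_rideal[OF m]] by (simp add: card_mono)
  then show ?case
    by (simp add: mult.commute)
next
  case (insert m' F)
  have "rideal (\<Inter>F)"
    using insert.prems by (simp add: rideal_Inter max_rideal_rideal)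
  show ?case
  proof (cases "\<Inter>F \<subseteq> m'")
    case True
    then have "\<Inter>(insert m' F) = \<Inter>F"
      by auto
    with insert show ?thesis
      by simp
  next
    case False
    have "\<Inter>(insert m' F) = \<Inter>F \<inter> m'"
      by auto
    with insert show ?thesis
      using card_transporter_Int_max_rideal[OF m _ \<open>rideal (\<Inter>F)\<close> False] by simp
  qed
qed

lemma min_rideal_range_mult:
  assumes m: "max_rideal m" and x: "x \<in> lann m" "x \<noteq> 0"
  shows "min_rideal (range ((\<cdot>) x))"
  unfolding min_rideal_def
proof (intro conjI allI impI)
  show xR: "rideal (range ((\<cdot>) x))"
    by (rule rideal_range_mult)
  have x_in: "x \<in> range ((\<cdot>) x)"
    by (metis R.mult.right_neutral rangeI)
  then show "range ((\<cdot>) x) \<noteq> {0}"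
    using x(2) by blast
  fix K assume K: "rideal K \<and> K \<subseteq> range ((\<cdot>) x)"
  show "K = {0} \<or> K = range ((\<cdot>) x)"
  proof (cases "K \<subseteq> {0}")
    case True
    then show ?thesis
      using K rideal_zero by blast
  next
    case False
    then obtain r where r: "x \<cdot> r \<in> K" "x \<cdot> r \<noteq> 0"
      using K by blast
    then have "r \<notin> m"
      using x(1) by (auto simp: lann_def)
    then obtain c \<mu> where \<mu>: "\<mu> \<in> m" and one: "one = r \<cdot> c + \<mu>"
      using max_rideal_mult_plus[OF m] by metis
    have "x = x \<cdot> (r \<cdot> c + \<mu>)"
      by (simp add: one[symmetric])
    also have "\<dots> = x \<cdot> r \<cdot> c"
      using x(1) \<mu> by (simp add: R.distrib_left R.mult.assoc lann_def)
    finally have "x \<in> K"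
      using K r(1) rideal_mult by metis
    then have "range ((\<cdot>) x) \<subseteq> K"
      using K by (auto intro: rideal_mult)
    then show ?thesis
      using K by blast
  qed
qed

lemma lann_subset_range_mult:
  assumes soc: "\<And>I. min_rideal I \<Longrightarrow> I \<subseteq> range ((\<cdot>) d)" and m: "max_rideal m"
  shows "lann m \<subseteq> range ((\<cdot>) d)"
proof
  fix x assume x: "x \<in> lann m"
  show "x \<in> range ((\<cdot>) d)"
  proof (cases "x = 0")
    case True
    then show ?thesis
      by (metis R.mult_zero_right rangeI)
  next
    case False
    have "x \<in> range ((\<cdot>) x)"
      by (metis R.mult.right_neutral rangeI)
    then show ?thesis
      using soc[OF min_rideal_range_mult[OF m x False]] by blast
  qed
qed

lemma transporter_Inter_max_rideals_eq_UNIV: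
  assumes m: "max_rideal m"
  shows "transporter (\<Inter>{I. max_rideal I}) m = UNIV"
proof (intro set_eqI iffI UNIV_I)
  fix x
  show "x \<in> transporter (\<Inter>{I. max_rideal I}) m"
  proof (cases "x \<in> m")
    case True
    then show ?thesis
      using subset_transporter[OF max_rideal_rideal[OF m]] by blast
  next
    case False
    then have "\<Inter>{I. max_rideal I} \<subseteq> {a. x \<cdot> a \<in> m}"
      using max_rideal_preimage_mult[OF m] by blast
    then show ?thesis
      by (auto simp: transporter_def)
  qed
qed

text \<open>Left multiplication by \<open>d\<close> maps \<open>R\<close> onto \<open>dR\<close> with kernel \<open>J\<close>; lifting \<open>lann m \<subseteq> dR\<close>
  along it gives elements \<open>y\<close> with \<open>y m \<subseteq> J\<close>, one coset of \<open>J\<close> for each element of \<open>lann m\<close>.\<close>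
lemma card_lann_kernel_le_transporter:
  assumes "lann m \<subseteq> range ((\<cdot>) d)" and J: "J = {a. d \<cdot> a = 0}"
  shows "card (lann m) * card J \<le> card (transporter m J)"
proof -
  obtain y where y: "\<forall>x\<in>lann m. d \<cdot> y x = x"
    using assms(1) by (metis image_iff subset_eq)
  have dy: "d \<cdot> (y x + j) = x" if "x \<in> lann m" "j \<in> J" for x j
    using that y J by (simp add: R.distrib_left)
  have "card (lann m \<times> J) \<le> card (transporter m J)"
  proof (rule card_inj_on_le[where f = "\<lambda>(x, j). y x + j"])
    show "inj_on (\<lambda>(x, j). y x + j) (lann m \<times> J)"
    proof (rule inj_onI, clarify)
      fix x j x' j' assume "x \<in> lann m" "j \<in> J" "x' \<in> lann m" "j' \<in> J" and eq: "y x + j = y x' + j'"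
      then have "x = x'"
        using dy by metis
      then show "x = x' \<and> j = j'"
        using eq by simp
    qed
    show "(\<lambda>(x, j). y x + j) ` (lann m \<times> J) \<subseteq> transporter m J"
    proof clarify
      fix x j assume x: "x \<in> lann m" and j: "j \<in> J"
      have "d \<cdot> ((y x + j) \<cdot> a) = x \<cdot> a + (d \<cdot> j) \<cdot> a" for a
        using x y by (simp add: R.mult.assoc[symmetric] R.distrib_left R.distrib_right)
      then have "d \<cdot> ((y x + j) \<cdot> a) = 0" if "a \<in> m" for a
        using x j that J by (simp add: lann_def)
      then show "y x + j \<in> transporter m J"
        by (simp add: transporter_def J)
    qed
  qed simp
  then show ?thesis
    by (simp add: card_cartesian_product)
qed

text \<open>Here \<open>d\<close> generates the socle and has the Jacobson radical \<open>J\<close> as right annihilator, i.e.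
  \<open>R/J \<cong> soc(R\<^sub>R)\<close>; this is the only place where the Frobenius property enters.\<close>
lemma card_lann_max_rideal:
  assumes soc: "\<And>I. min_rideal I \<Longrightarrow> I \<subseteq> range ((\<cdot>) d)"
    and jac: "{a. d \<cdot> a = 0} = \<Inter>{I. max_rideal I}"
    and m: "max_rideal m"
  shows "card (lann m) * card m \<le> card (UNIV :: 'r set)"
proof -
  let ?J = "\<Inter>{I. max_rideal I}"
  have J: "rideal ?J"
    by (rule rideal_Inter) (simp add: max_rideal_rideal)
  have "card (lann m) * card ?J \<le> card (transporter m ?J)"
    using lann_subset_range_mult[OF soc m] jac[symmetric] by (rule card_lann_kernel_le_transporter)
  then have "card (lann m) * card m * card ?J \<le> card (transporter m ?J) * card m"
    by (simp add: ac_simps)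
  also have "\<dots> \<le> card (transporter ?J m) * card ?J"
    using m by (rule card_transporter_Inter_max_rideals) simp_all
  also have "\<dots> = card (UNIV :: 'r set) * card ?J"
    using m by (simp add: transporter_Inter_max_rideals_eq_UNIV)
  finally show ?thesis
    using card_rideal_pos[OF J] by simp
qed

end

section \<open>Duals of finite right modules\<close>

locale finite_right_module = finite_ring mul one
  for mul :: "'r::{ab_group_add, finite} \<Rightarrow> 'r \<Rightarrow> 'r" (infixl "\<cdot>" 70) and one +
  fixes act :: "'m::{ab_group_add, finite} \<Rightarrow> 'r \<Rightarrow> 'm"
  assumes act_add_left: "act (x + y) r = act x r + act y r"
    and act_add_right: "act x (r + t) = act x r + act x t"
    and act_mult: "act x (r \<cdot> t) = act (act x r) t"
    and act_one [simp]: "act x one = x"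
begin

lemma additive_act_left: "additive (\<lambda>x. act x r)"
  by (simp add: additive_def act_add_left)

lemma additive_act_right: "additive (act x)"
  by (simp add: additive_def act_add_right)

lemma act_zero_left [simp]: "act 0 r = 0"
  using additive.zero[OF additive_act_left] by simp

lemma act_zero_right [simp]: "act x 0 = 0"
  by (rule additive.zero[OF additive_act_right])

lemma act_uminus_right: "act x (- r) = - act x r"
  by (rule additive.minus[OF additive_act_right])

lemma act_diff_right: "act x (r - t) = act x r - act x t"
  by (rule additive.diff[OF additive_act_right])

definition submodule :: "'m set \<Rightarrow> bool" where
  "submodule N \<longleftrightarrow> 0 \<in> N \<and> (\<forall>x\<in>N. \<forall>y\<in>N. x + y \<in> N) \<and> (\<forall>x\<in>N. - x \<in> N) \<and> (\<forall>x\<in>N. \<forall>r. act x r \<in> N)"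

definition maximal_submodule :: "'m set \<Rightarrow> 'm set \<Rightarrow> bool" where
  "maximal_submodule N0 N \<longleftrightarrow> submodule N0 \<and> N0 \<subset> N \<and> (\<forall>N1. submodule N1 \<and> N0 \<subset> N1 \<and> N1 \<subseteq> N \<longrightarrow> N1 = N)"

text \<open>Linear functionals on \<open>N\<close>, extended by \<open>0\<close> outside \<open>N\<close> so that each is a unique total function.\<close>
definition dual_on :: "'m set \<Rightarrow> ('m \<Rightarrow> 'r) set" where
  "dual_on N = {f. (\<forall>y. y \<notin> N \<longrightarrow> f y = 0) \<and> (\<forall>x\<in>N. \<forall>y\<in>N. f (x + y) = f x + f y)
      \<and> (\<forall>y\<in>N. \<forall>r. f (act y r) = f y \<cdot> r)}"

lemma submodule_zero: "submodule N \<Longrightarrow> 0 \<in> N"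
  by (simp add: submodule_def)

lemma submodule_add: "submodule N \<Longrightarrow> x \<in> N \<Longrightarrow> y \<in> N \<Longrightarrow> x + y \<in> N"
  by (simp add: submodule_def)

lemma submodule_uminus: "submodule N \<Longrightarrow> x \<in> N \<Longrightarrow> - x \<in> N"
  by (simp add: submodule_def)

lemma submodule_diff: "submodule N \<Longrightarrow> x \<in> N \<Longrightarrow> y \<in> N \<Longrightarrow> x - y \<in> N"
  by (metis diff_conv_add_uminus submodule_add submodule_uminus)

lemma submodule_act: "submodule N \<Longrightarrow> x \<in> N \<Longrightarrow> act x r \<in> N"
  by (simp add: submodule_def)

lemma dual_on_outside: "f \<in> dual_on N \<Longrightarrow> y \<notin> N \<Longrightarrow> f y = 0"
  by (simp add: dual_on_def)

lemma dual_on_add: "f \<in> dual_on N \<Longrightarrow> x \<in> N \<Longrightarrow> y \<in> N \<Longrightarrow> f (x + y) = f x + f y"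
  by (simp add: dual_on_def)

lemma dual_on_act: "f \<in> dual_on N \<Longrightarrow> y \<in> N \<Longrightarrow> f (act y r) = f y \<cdot> r"
  by (simp add: dual_on_def)

lemma rideal_act_preimage: "submodule N \<Longrightarrow> rideal {r. act s r \<in> N}"
  by (simp add: rideal_def act_add_right act_uminus_right act_mult submodule_add submodule_uminus
      submodule_zero submodule_act)

lemma submodule_plus_act:
  assumes N: "submodule N" and K: "rideal K"
  shows "submodule {n + act s k | n k. n \<in> N \<and> k \<in> K}"
  unfolding submodule_def
proof (intro conjI ballI allI)
  show "0 \<in> {n + act s k | n k. n \<in> N \<and> k \<in> K}"
    using submodule_zero[OF N] rideal_zero[OF K] by force
  fix x y r
  assume "x \<in> {n + act s k | n k. n \<in> N \<and> k \<in> K}" "y \<in> {n + act s k | n k. n \<in> N \<and> k \<in> K}"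
  then obtain n k n' k' where x: "x = n + act s k" "n \<in> N" "k \<in> K" and y: "y = n' + act s k'" "n' \<in> N" "k' \<in> K"
    by blast
  have "x + y = (n + n') + act s (k + k')"
    using x y by (simp add: act_add_right algebra_simps)
  then show "x + y \<in> {n + act s k | n k. n \<in> N \<and> k \<in> K}"
    using x y submodule_add[OF N] rideal_add[OF K] by blast
  have "- x = (- n) + act s (- k)"
    using x by (simp add: act_uminus_right)
  then show "- x \<in> {n + act s k | n k. n \<in> N \<and> k \<in> K}"
    using x submodule_uminus[OF N] rideal_uminus[OF K] by blast
  have "act x r = act n r + act s (k \<cdot> r)"
    using x by (simp add: act_add_left act_mult)
  then show "act x r \<in> {n + act s k | n k. n \<in> N \<and> k \<in> K}"
    using x submodule_act[OF N] rideal_mult[OF K] by blast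
qed

lemma ex_maximal_submodule:
  assumes "submodule N" "N \<noteq> {0}"
  obtains N0 where "maximal_submodule N0 N"
proof -
  let ?P = "{N0. submodule N0 \<and> N0 \<subset> N}"
  have "submodule {0}"
    by (simp add: submodule_def)
  moreover have "{0} \<subset> N"
    using assms submodule_zero by blast
  ultimately have "?P \<noteq> {}"
    by blast
  then obtain N0 where N0: "N0 \<in> ?P" and max: "\<forall>N1\<in>?P. N0 \<le> N1 \<longrightarrow> N0 = N1"
    using finite_has_maximal[of ?P] by auto
  have "maximal_submodule N0 N"
    unfolding maximal_submodule_def using N0 max by auto
  then show ?thesis
    using that by blast
qed

lemma maximal_submodule_eq_plus_act:
  assumes N: "submodule N" and N0: "maximal_submodule N0 N" and s: "s \<in> N" "s \<notin> N0"
    and K: "rideal K" "\<exists>k\<in>K. act s k \<notin> N0"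
  shows "N = {n + act s k | n k. n \<in> N0 \<and> k \<in> K}"
proof -
  have sub: "submodule N0" "N0 \<subset> N"
    using N0 by (simp_all add: maximal_submodule_def)
  have "N0 \<subseteq> {n + act s k | n k. n \<in> N0 \<and> k \<in> K}"
  proof
    fix n assume "n \<in> N0"
    moreover have "n = n + act s 0" by simp
    ultimately show "n \<in> {n + act s k | n k. n \<in> N0 \<and> k \<in> K}"
      using rideal_zero[OF K(1)] by blast
  qed
  moreover have "{n + act s k | n k. n \<in> N0 \<and> k \<in> K} \<noteq> N0"
  proof -
    obtain k where "k \<in> K" "act s k \<notin> N0"
      using K(2) by blast
    moreover have "act s k = 0 + act s k" by simp
    ultimately show ?thesis
      using submodule_zero[OF sub(1)] by blast
  qed
  moreover have "{n + act s k | n k. n \<in> N0 \<and> k \<in> K} \<subseteq> N"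
    using sub N s(1) submodule_add submodule_act by blast
  ultimately show ?thesis
    using N0 submodule_plus_act[OF sub(1) K(1)] unfolding maximal_submodule_def by blast
qed

lemma max_rideal_act_preimage:
  assumes N: "submodule N" and N0: "maximal_submodule N0 N" and s: "s \<in> N" "s \<notin> N0"
  shows "max_rideal {r. act s r \<in> N0}"
  unfolding max_rideal_def
proof (intro conjI allI impI)
  have sub: "submodule N0"
    using N0 by (simp add: maximal_submodule_def)
  show "rideal {r. act s r \<in> N0}"
    using sub by (rule rideal_act_preimage)
  show "{r. act s r \<in> N0} \<noteq> UNIV"
    using s(2) by (metis (mono_tags) CollectD UNIV_I act_one)
  fix K assume K: "rideal K \<and> {r. act s r \<in> N0} \<subseteq> K"
  show "K = {r. act s r \<in> N0} \<or> K = UNIV"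
  proof (cases "\<exists>k\<in>K. act s k \<notin> N0")
    case True
    then have "s \<in> {n + act s k | n k. n \<in> N0 \<and> k \<in> K}"
      using maximal_submodule_eq_plus_act[OF N N0 s] K s(1) by blast
    then obtain n k where "n \<in> N0" "k \<in> K" "s = n + act s k"
      by blast
    then have "act s (one - k) \<in> N0"
      by (metis act_diff_right act_one add_diff_cancel_right')
    then have "(one - k) + k \<in> K"
      using K \<open>k \<in> K\<close> rideal_add by blast
    then show ?thesis
      using K rideal_eq_UNIV by auto
  qed (use K in blast)
qed

lemma card_le_plus_act:
  assumes N0: "submodule N0" and N: "{n + act s r | n r. n \<in> N0} \<subseteq> N"
  shows "card N0 * card (UNIV :: 'r set) \<le> card {r. act s r \<in> N0} * card N"
proof -
  have "card (N0 \<times> (UNIV :: 'r set)) \<le> card {r. act s r \<in> N0} * card N"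
  proof (rule card_le_by_fibre_differences[where F = "\<lambda>(n, r). n + act s r" and g = snd])
    show "(\<lambda>(n, r). n + act s r) ` (N0 \<times> UNIV) \<subseteq> N"
      using N by auto
    fix p q
    assume p: "p \<in> N0 \<times> UNIV" and q: "q \<in> N0 \<times> UNIV"
      and eq: "(\<lambda>(n, r). n + act s r) p = (\<lambda>(n, r). n + act s r) q"
    obtain n r n' r' where pq: "p = (n, r)" "q = (n', r')"
      by (cases p, cases q)
    have "n + act s r = n' + act s r'"
      using eq pq by simp
    then have "act s (r - r') = n' - n"
      unfolding act_diff_right by (simp add: algebra_simps)
    moreover have "n' - n \<in> N0"
      using p q pq submodule_diff[OF N0] by simp
    ultimately show "snd p - snd q \<in> {r. act s r \<in> N0}"
      using pq by simp
    show "snd p = snd q \<Longrightarrow> p = q"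
      using eq pq by simp
  qed simp_all
  then show ?thesis
    by (simp add: card_cartesian_product)
qed

text \<open>A functional on \<open>N = N0 + sR\<close> is determined by its restriction to \<open>N0\<close> and its value at \<open>s\<close>;
  two extensions of the same restriction differ at \<open>s\<close> by an element killing \<open>{r. s r \<in> N0}\<close>.\<close>
lemma card_dual_on_le_plus_act:
  assumes N0: "submodule N0" and N: "submodule N" "N0 \<subseteq> N" "s \<in> N"
    and gen: "N \<subseteq> {n + act s r | n r. n \<in> N0}"
  shows "card (dual_on N) \<le> card (lann {r. act s r \<in> N0}) * card (dual_on N0)"
proof (rule card_le_by_fibre_differences[where F = "\<lambda>f y. if y \<in> N0 then f y else 0" and g = "\<lambda>f. f s"])
  show "(\<lambda>f y. if y \<in> N0 then f y else 0) ` dual_on N \<subseteq> dual_on N0"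
  proof clarify
    fix f assume f: "f \<in> dual_on N"
    have "x \<in> N" if "x \<in> N0" for x
      using that N(2) by blast
    then show "(\<lambda>y. if y \<in> N0 then f y else 0) \<in> dual_on N0"
      unfolding dual_on_def
      using dual_on_add[OF f] dual_on_act[OF f] submodule_add[OF N0] submodule_act[OF N0]
      by auto
  qed
  fix f f'
  assume f: "f \<in> dual_on N" and f': "f' \<in> dual_on N"
    and eq: "(\<lambda>y. if y \<in> N0 then f y else 0) = (\<lambda>y. if y \<in> N0 then f' y else 0)"
  have on_N0: "f n = f' n" if "n \<in> N0" for n
    using fun_cong[OF eq, of n] that by simp
  show "f s - f' s \<in> lann {r. act s r \<in> N0}"
    unfolding lann_def
  proof (intro CollectI ballI)
    fix r assume "r \<in> {r. act s r \<in> N0}"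
    then have "f (act s r) = f' (act s r)"
      by (simp add: on_N0)
    then show "(f s - f' s) \<cdot> r = 0"
      using dual_on_act[OF f N(3)] dual_on_act[OF f' N(3)] by (simp add: R.left_diff_distrib)
  qed
  assume fs: "f s = f' s"
  show "f = f'"
  proof
    fix y
    show "f y = f' y"
    proof (cases "y \<in> N")
      case True
      then obtain n r where n: "n \<in> N0" and y: "y = n + act s r"
        using gen by blast
      have "n \<in> N" "act s r \<in> N"
        using n N submodule_act by blast+
      then show ?thesis
        using y n fs on_N0 dual_on_add[OF f] dual_on_add[OF f'] dual_on_act[OF f N(3)] dual_on_act[OF f' N(3)]
        by simp
    next
      case False
      then show ?thesis
        using f f' by (simp add: dual_on_outside)
    qed
  qed
qed simp_all

lemma card_dual_on_zero: "card (dual_on {0}) \<le> 1"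
proof -
  have "dual_on {0} \<subseteq> {\<lambda>_. 0}"
  proof
    fix f assume f: "f \<in> dual_on {0}"
    then have "f 0 = 0"
      using dual_on_add[OF f, of 0 0] by simp
    then have "f y = 0" for y
      using dual_on_outside[OF f] by (cases "y = 0") auto
    then show "f \<in> {\<lambda>_. 0}"
      by (simp add: fun_eq_iff)
  qed
  then have "card (dual_on {0}) \<le> card {\<lambda>_ :: 'm. 0 :: 'r}"
    by (rule card_mono[rotated]) simp
  then show ?thesis
    by simp
qed

lemma card_dual_on_le_maximal_submodule:
  assumes lann_bound: "\<And>m. max_rideal m \<Longrightarrow> card (lann m) * card m \<le> card (UNIV :: 'r set)"
    and N: "submodule N" and N0: "maximal_submodule N0 N"
    and IH: "card (dual_on N0) \<le> card N0"
  shows "card (dual_on N) \<le> card N"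
proof -
  have sub: "submodule N0" "N0 \<subset> N"
    using N0 by (simp_all add: maximal_submodule_def)
  then obtain s where s: "s \<in> N" "s \<notin> N0"
    by blast
  let ?m = "{r. act s r \<in> N0}"
  have m: "max_rideal ?m"
    using N N0 s by (rule max_rideal_act_preimage)
  have "\<exists>k\<in>UNIV. act s k \<notin> N0"
    using s(2) by (metis UNIV_I act_one)
  then have "N = {n + act s k | n k. n \<in> N0 \<and> k \<in> UNIV}"
    by (rule maximal_submodule_eq_plus_act[OF N N0 s rideal_UNIV])
  then have gen: "N = {n + act s r | n r. n \<in> N0}"
    by simp
  have dual_N: "card (dual_on N) \<le> card (lann ?m) * card (dual_on N0)"
    using sub(2) equalityD1[OF gen] by (intro card_dual_on_le_plus_act[OF sub(1) N _ s(1)]) auto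
  have card_N: "card N0 * card (UNIV :: 'r set) \<le> card ?m * card N"
    using sub(1) equalityD2[OF gen] by (rule card_le_plus_act)
  have "card (dual_on N) * card ?m \<le> card (lann ?m) * card (dual_on N0) * card ?m"
    using dual_N by (rule mult_right_mono) simp
  also have "\<dots> \<le> card (lann ?m) * card N0 * card ?m"
    using IH by (intro mult_right_mono mult_left_mono) simp_all
  also have "\<dots> = (card (lann ?m) * card ?m) * card N0"
    by (simp add: ac_simps)
  also have "\<dots> \<le> card (UNIV :: 'r set) * card N0"
    using lann_bound[OF m] by (rule mult_right_mono) simp
  also have "\<dots> \<le> card N * card ?m"
    using card_N by (simp add: mult.commute)
  finally show ?thesis
    using card_rideal_pos[OF max_rideal_rideal[OF m]] by simp
qed

lemma card_dual_on_le:
  assumes lann_bound: "\<And>m. max_rideal m \<Longrightarrow> card (lann m) * card m \<le> card (UNIV :: 'r set)"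
    and "submodule N"
  shows "card (dual_on N) \<le> card N"
  using assms(2)
proof (induction "card N" arbitrary: N rule: less_induct)
  case less
  show ?case
  proof (cases "N = {0}")
    case True
    then show ?thesis
      using card_dual_on_zero by simp
  next
    case False
    then obtain N0 where N0: "maximal_submodule N0 N"
      using ex_maximal_submodule less.prems by blast
    have sub: "submodule N0" "N0 \<subset> N"
      using N0 by (simp_all add: maximal_submodule_def)
    have "card (dual_on N0) \<le> card N0"
      using less.hyps[OF psubset_card_mono[OF _ sub(2)] sub(1)] by simp
    with lann_bound less.prems N0 show ?thesis
      by (rule card_dual_on_le_maximal_submodule)
  qed
qed

lemma card_module_dual_le:
  assumes "\<And>m. max_rideal m \<Longrightarrow> card (lann m) * card m \<le> card (UNIV :: 'r set)"
  shows "card {f. (\<forall>x y. f (x + y) = f x + f y) \<and> (\<forall>y r. f (act y r) = f y \<cdot> r)} \<le> card (UNIV :: 'm set)"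
proof -
  have "submodule UNIV"
    by (simp add: submodule_def)
  then have "card (dual_on UNIV) \<le> card (UNIV :: 'm set)"
    using card_dual_on_le assms by blast
  moreover have "dual_on UNIV = {f. (\<forall>x y. f (x + y) = f x + f y) \<and> (\<forall>y r. f (act y r) = f y \<cdot> r)}"
    unfolding dual_on_def by (intro Collect_cong) simp
  ultimately show ?thesis
    by simp
qed

end

section \<open>Frobenius rings and bilinear forms\<close>

definition right_dual :: "('m::ab_group_add \<Rightarrow> 'r::ring_1 \<Rightarrow> 'm) \<Rightarrow> ('m \<Rightarrow> 'r) set" where
  "right_dual rm = {f. (\<forall>x y. f (x + y) = f x + f y) \<and> (\<forall>y r. f (rm y r) = f y * r)}"

definition left_dual :: "('r::ring_1 \<Rightarrow> 'm::ab_group_add \<Rightarrow> 'm) \<Rightarrow> ('m \<Rightarrow> 'r) set" where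
  "left_dual lm = {f. (\<forall>x y. f (x + y) = f x + f y) \<and> (\<forall>y r. f (lm r y) = r * f y)}"

lemma card_right_dual_le:
  fixes lm :: "'r::{ring_1, finite} \<Rightarrow> 'm::{ab_group_add, finite} \<Rightarrow> 'm"
  assumes frob: "frobenius_ring TYPE('r)" and bimod: "bimodule lm rm"
  shows "card (right_dual rm) \<le> card (UNIV :: 'm set)"
proof -
  interpret M: finite_right_module "(*)" 1 rm
    using bimod by unfold_locales (simp_all add: bimodule_def)
  obtain f :: "'r \<Rightarrow> 'r" where f: "\<forall>a b. f (a * b) = f a * b" "range f = right_socle"
      "{a. f a = 0} = jacobson_right"
    using frob unfolding frobenius_ring_def by blast
  define d where "d = f 1"
  have f_d: "f = (*) d"
  proof
    fix a
    have "f (1 * a) = f 1 * a"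
      using f(1) by blast
    then show "f a = d * a"
      by (simp add: d_def)
  qed
  have rideal: "M.rideal = right_ideal"
    by (simp add: fun_eq_iff M.rideal_def right_ideal_def)
  have ideals: "M.max_rideal = maximal_right_ideal" "M.min_rideal = minimal_right_ideal"
    by (simp_all add: fun_eq_iff M.max_rideal_def maximal_right_ideal_def M.min_rideal_def
        minimal_right_ideal_def rideal)
  have "I \<subseteq> range ((*) d)" if "M.min_rideal I" for I
    using that f(2) f_d unfolding ideals right_socle_def by blast
  moreover have "{a. d * a = 0} = \<Inter>{I. M.max_rideal I}"
    using f(3) f_d unfolding ideals jacobson_right_def by simp
  ultimately show ?thesis
    unfolding right_dual_def by (intro M.card_module_dual_le M.card_lann_max_rideal)
qed

lemma card_left_dual_le:
  fixes lm :: "'r::{ring_1, finite} \<Rightarrow> 'm::{ab_group_add, finite} \<Rightarrow> 'm"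
  assumes frob: "frobenius_ring TYPE('r)" and bimod: "bimodule lm rm"
  shows "card (left_dual lm) \<le> card (UNIV :: 'm set)"
proof -
  interpret M: finite_right_module "\<lambda>a b. b * a" 1 "\<lambda>y r. lm r y"
    using bimod by unfold_locales (simp_all add: bimodule_def algebra_simps mult.assoc)
  obtain f :: "'r \<Rightarrow> 'r" where f: "\<forall>a b. f (a * b) = a * f b" "range f = left_socle"
      "{a. f a = 0} = jacobson_left"
    using frob unfolding frobenius_ring_def by blast
  define d where "d = f 1"
  have f_d: "f = (\<lambda>a. a * d)"
  proof
    fix a
    have "f (a * 1) = a * f 1"
      using f(1) by blast
    then show "f a = a * d"
      by (simp add: d_def)
  qed
  have rideal: "M.rideal = left_ideal"
    by (simp add: fun_eq_iff M.rideal_def left_ideal_def)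
  have ideals: "M.max_rideal = maximal_left_ideal" "M.min_rideal = minimal_left_ideal"
    by (simp_all add: fun_eq_iff M.max_rideal_def maximal_left_ideal_def M.min_rideal_def
        minimal_left_ideal_def rideal)
  have "I \<subseteq> range (\<lambda>a. a * d)" if "M.min_rideal I" for I
    using that f(2) f_d unfolding ideals left_socle_def by blast
  moreover have "{a. a * d = 0} = \<Inter>{I. M.max_rideal I}"
    using f(3) f_d unfolding ideals jacobson_left_def by simp
  ultimately show ?thesis
    unfolding left_dual_def by (intro M.card_module_dual_le M.card_lann_max_rideal)
qed

lemma bilinear_form_diff_left:
  assumes "bilinear_form lm rm B"
  shows "B (x - x') y = B x y - B x' y"
proof -
  have "additive (\<lambda>x. B x y)"
    using assms by (simp add: additive_def bilinear_form_def)
  then show ?thesis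
    using additive.diff by fastforce
qed

lemma bilinear_form_diff_right:
  assumes "bilinear_form lm rm B"
  shows "B x (y - y') = B x y - B x y'"
proof -
  have "additive (B x)"
    using assms by (simp add: additive_def bilinear_form_def)
  then show ?thesis
    by (rule additive.diff)
qed

lemma inj_bilinear_form_left:
  assumes "B \<in> BLF lm rm"
  shows "inj B"
proof (rule injI)
  have bil: "bilinear_form lm rm B" and nd: "nondegenerate B"
    using assms by (simp_all add: BLF_def)
  fix x x' assume "B x = B x'"
  then have "\<forall>y. B (x - x') y = 0"
    by (simp add: bilinear_form_diff_left[OF bil])
  then have "x - x' = 0"
    using nd unfolding nondegenerate_def by blast
  then show "x = x'"
    by simp
qed

lemma inj_bilinear_form_right:
  assumes "B \<in> BLF lm rm"
  shows "inj (\<lambda>y x. B x y)"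
proof (rule injI)
  have bil: "bilinear_form lm rm B" and nd: "nondegenerate B"
    using assms by (simp_all add: BLF_def)
  fix y y' assume "(\<lambda>x. B x y) = (\<lambda>x. B x y')"
  then have "\<forall>x. B x (y - y') = 0"
    by (simp add: bilinear_form_diff_right[OF bil] fun_eq_iff)
  then have "y - y' = 0"
    using nd unfolding nondegenerate_def by blast
  then show "y = y'"
    by simp
qed

lemma inj_factors_through_bij:
  fixes \<Phi> \<Psi> :: "'a::finite \<Rightarrow> 'b"
  assumes "inj \<Phi>" "inj \<Psi>" "range \<Phi> \<subseteq> D" "range \<Psi> \<subseteq> D" "finite D" "card D \<le> card (UNIV :: 'a set)"
  obtains g where "bij g" "\<And>x. \<Psi> x = \<Phi> (g x)"
proof -
  have "range \<Phi> = D"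
  proof (rule card_seteq[OF assms(5,3)])
    show "card D \<le> card (range \<Phi>)"
      using assms(1,6) by (simp add: card_image)
  qed
  then have \<Psi>: "\<Phi> (inv \<Phi> (\<Psi> x)) = \<Psi> x" for x
    using assms(4) by (intro f_inv_into_f) blast
  have "inj (inv \<Phi> \<circ> \<Psi>)"
  proof (rule injI)
    fix x y assume "(inv \<Phi> \<circ> \<Psi>) x = (inv \<Phi> \<circ> \<Psi>) y"
    then have "\<Psi> x = \<Psi> y"
      using \<Psi> by (metis comp_apply)
    then show "x = y"
      by (rule injD[OF assms(2)])
  qed
  then have "bij (inv \<Phi> \<circ> \<Psi>)"
    unfolding bij_def using finite_UNIV_inj_surj[OF finite_UNIV] by blast
  then show ?thesis
    using that \<Psi> by simp
qed

lemma BLF_comp_Aut_left: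
  assumes B: "B \<in> BLF lm rm" and g: "g \<in> Aut_left lm"
  shows "(\<lambda>x y. B (g x) y) \<in> BLF lm rm"
proof -
  have bil: "bilinear_form lm rm B" and nd: "nondegenerate B"
    using B by (simp_all add: BLF_def)
  have bij: "bij g" and add: "\<And>x y. g (x + y) = g x + g y" and lin: "\<And>r x. g (lm r x) = lm r (g x)"
    using g by (simp_all add: Aut_left_def)
  have "bilinear_form lm rm (\<lambda>x y. B (g x) y)"
    using bil by (simp add: bilinear_form_def add lin)
  moreover have "nondegenerate (\<lambda>x y. B (g x) y)"
    unfolding nondegenerate_def
  proof (intro conjI allI impI)
    fix x assume "\<forall>y. B (g x) y = 0"
    then have "g x = g 0"
      using nd add[of 0 0] unfolding nondegenerate_def by simp
    then show "x = 0"
      using bij by (simp add: bij_is_inj inj_eq)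
  next
    fix y assume y: "\<forall>x. B (g x) y = 0"
    have "B z y = 0" for z
      using y surjD[OF bij_is_surj[OF bij], of z] by auto
    then show "y = 0"
      using nd unfolding nondegenerate_def by blast
  qed
  ultimately show ?thesis
    by (simp add: BLF_def)
qed

lemma BLF_comp_Aut_right:
  assumes B: "B \<in> BLF lm rm" and h: "h \<in> Aut_right rm"
  shows "(\<lambda>x y. B x (h y)) \<in> BLF lm rm"
proof -
  have bil: "bilinear_form lm rm B" and nd: "nondegenerate B"
    using B by (simp_all add: BLF_def)
  have bij: "bij h" and add: "\<And>x y. h (x + y) = h x + h y" and lin: "\<And>r x. h (rm x r) = rm (h x) r"
    using h by (simp_all add: Aut_right_def)
  have "bilinear_form lm rm (\<lambda>x y. B x (h y))"
    using bil by (simp add: bilinear_form_def add lin)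
  moreover have "nondegenerate (\<lambda>x y. B x (h y))"
    unfolding nondegenerate_def
  proof (intro conjI allI impI)
    fix x assume x: "\<forall>y. B x (h y) = 0"
    have "B x z = 0" for z
      using x surjD[OF bij_is_surj[OF bij], of z] by auto
    then show "x = 0"
      using nd unfolding nondegenerate_def by blast
  next
    fix y assume "\<forall>x. B x (h y) = 0"
    then have "h y = h 0"
      using nd add[of 0 0] unfolding nondegenerate_def by simp
    then show "y = 0"
      using bij by (simp add: bij_is_inj inj_eq)
  qed
  ultimately show ?thesis
    by (simp add: BLF_def)
qed

lemma BLF_eq_comp_Aut_left:
  fixes lm :: "'r::{ring_1, finite} \<Rightarrow> 'm::{ab_group_add, finite} \<Rightarrow> 'm"
  assumes B: "B \<in> BLF lm rm" and card: "card (right_dual rm) \<le> card (UNIV :: 'm set)"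
  shows "BLF lm rm = {(\<lambda>x y. B (g x) y) | g. g \<in> Aut_left lm}"
proof (intro subset_antisym subsetI)
  fix B' assume B': "B' \<in> BLF lm rm"
  have bil: "bilinear_form lm rm B" "bilinear_form lm rm B'"
    using B B' by (simp_all add: BLF_def)
  then have ranges: "range B \<subseteq> right_dual rm" "range B' \<subseteq> right_dual rm"
    by (auto simp: right_dual_def bilinear_form_def)
  have "finite (right_dual rm)"
    by simp
  then obtain g where bij: "bij g" and g: "\<And>x. B' x = B (g x)"
    using inj_factors_through_bij[OF inj_bilinear_form_left[OF B] inj_bilinear_form_left[OF B'] ranges _ card]
    by blast
  have "g (x + y) = g x + g y" for x y
  proof (rule injD[OF inj_bilinear_form_left[OF B]])
    show "B (g (x + y)) = B (g x + g y)"
      using bil by (simp add: fun_eq_iff g[symmetric] bilinear_form_def)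
  qed
  moreover have "g (lm r x) = lm r (g x)" for r x
  proof (rule injD[OF inj_bilinear_form_left[OF B]])
    show "B (g (lm r x)) = B (lm r (g x))"
      using bil by (simp add: fun_eq_iff g[symmetric] bilinear_form_def)
  qed
  ultimately have "g \<in> Aut_left lm"
    using bij by (simp add: Aut_left_def)
  moreover have "B' = (\<lambda>x y. B (g x) y)"
    using g by (simp add: fun_eq_iff)
  ultimately show "B' \<in> {(\<lambda>x y. B (g x) y) | g. g \<in> Aut_left lm}"
    by blast
next
  fix B' assume "B' \<in> {(\<lambda>x y. B (g x) y) | g. g \<in> Aut_left lm}"
  then show "B' \<in> BLF lm rm"
    using BLF_comp_Aut_left[OF B] by blast
qed

lemma BLF_eq_comp_Aut_right:
  fixes lm :: "'r::{ring_1, finite} \<Rightarrow> 'm::{ab_group_add, finite} \<Rightarrow> 'm"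
  assumes B: "B \<in> BLF lm rm" and card: "card (left_dual lm) \<le> card (UNIV :: 'm set)"
  shows "BLF lm rm = {(\<lambda>x y. B x (h y)) | h. h \<in> Aut_right rm}"
proof (intro subset_antisym subsetI)
  fix B' assume B': "B' \<in> BLF lm rm"
  have bil: "bilinear_form lm rm B" "bilinear_form lm rm B'"
    using B B' by (simp_all add: BLF_def)
  then have ranges: "range (\<lambda>y x. B x y) \<subseteq> left_dual lm" "range (\<lambda>y x. B' x y) \<subseteq> left_dual lm"
    by (auto simp: left_dual_def bilinear_form_def)
  have "finite (left_dual lm)"
    by simp
  then obtain h where bij: "bij h" and h: "\<And>y. (\<lambda>x. B' x y) = (\<lambda>x. B x (h y))"
    using inj_factors_through_bij[OF inj_bilinear_form_right[OF B] inj_bilinear_form_right[OF B'] ranges _ card]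
    by blast
  have h': "B' x y = B x (h y)" for x y
    using fun_cong[OF h] by simp
  have "h (x + y) = h x + h y" for x y
  proof (rule injD[OF inj_bilinear_form_right[OF B]])
    show "(\<lambda>z. B z (h (x + y))) = (\<lambda>z. B z (h x + h y))"
      using bil by (simp add: fun_eq_iff h'[symmetric] bilinear_form_def)
  qed
  moreover have "h (rm y r) = rm (h y) r" for r y
  proof (rule injD[OF inj_bilinear_form_right[OF B]])
    show "(\<lambda>z. B z (h (rm y r))) = (\<lambda>z. B z (rm (h y) r))"
      using bil by (simp add: fun_eq_iff h'[symmetric] bilinear_form_def)
  qed
  ultimately have "h \<in> Aut_right rm"
    using bij by (simp add: Aut_right_def)
  moreover have "B' = (\<lambda>x y. B x (h y))"
    using h' by (simp add: fun_eq_iff)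
  ultimately show "B' \<in> {(\<lambda>x y. B x (h y)) | h. h \<in> Aut_right rm}"
    by blast
next
  fix B' assume "B' \<in> {(\<lambda>x y. B x (h y)) | h. h \<in> Aut_right rm}"
  then show "B' \<in> BLF lm rm"
    using BLF_comp_Aut_right[OF B] by blast
qed

theorem theoremA1:
  fixes lm :: "'r::{ring_1, finite} \<Rightarrow> 'm::{ab_group_add, finite} \<Rightarrow> 'm"
    and rm :: "'m \<Rightarrow> 'r \<Rightarrow> 'm"
    and B :: "'m \<Rightarrow> 'm \<Rightarrow> 'r"
  assumes "frobenius_ring TYPE('r)"
    and "bimodule lm rm"
    and "B \<in> BLF lm rm"
  shows "BLF lm rm = {(\<lambda>x y. B (g x) y) | g. g \<in> Aut_left lm}
       \<and> BLF lm rm = {(\<lambda>x y. B x (h y)) | h. h \<in> Aut_right rm}"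
  using BLF_eq_comp_Aut_left[OF assms(3) card_right_dual_le[OF assms(1,2)]]
    BLF_eq_comp_Aut_right[OF assms(3) card_left_dual_le[OF assms(1,2)]]
  by blast

end
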